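(* Let $G$ be a group with a split $BN$-pair $(H,U,N)$ with finite Weyl group, let $n_0\in N$ represent the longest element of the Weyl group and $U^-:=U^{n_0}$. Then $H\cap UU^-U=\{1\}$.
   Context: A split $BN$-pair $(H,U,N)$ for $G$ means $B=H\ltimes U$ and $N$ satisfy the axioms of split $BN$-pairs (as in Carter, Finite Groups of Lie Type, \S 2.5) with $H=B\cap N$. Products are setwise. *)

theory Defs
  imports "HOL-Algebra.Algebra"
begin

text \<open>Weyl group W = N/H realised as the set of right cosets H n (n in N),
  with setwise product; its identity is H.\<close>

definition weyl_group :: "('a, 'b) monoid_scheme \<Rightarrow> 'a set \<Rightarrow> 'a set \<Rightarrow> 'a set set" where
  "weyl_group G H N = {H #>\<^bsub>G\<^esub> n | n. n \<in> N}"

definition coset_word_prod :: "('a, 'b) monoid_scheme \<Rightarrow> 'a set \<Rightarrow> 'a set list \<Rightarrow> 'a set" where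
  "coset_word_prod G H ws = foldr (\<lambda>w acc. w <#>\<^bsub>G\<^esub> acc) ws H"

definition weyl_length :: "('a, 'b) monoid_scheme \<Rightarrow> 'a set \<Rightarrow> 'a set set \<Rightarrow> 'a set \<Rightarrow> nat" where
  "weyl_length G H S w =
     (LEAST k. \<exists>ws. set ws \<subseteq> S \<and> length ws = k \<and> coset_word_prod G H ws = w)"

text \<open>BN-pair axioms (Carter, Finite Groups of Lie Type, 2.1), with H = B \<inter> N and
  S the distinguished set of involutions generating W.\<close>
definition BN_pair :: "('a, 'b) monoid_scheme \<Rightarrow> 'a set \<Rightarrow> 'a set \<Rightarrow> 'a set set \<Rightarrow> bool" where
  "BN_pair G B N S \<longleftrightarrow>
     group G \<and> subgroup B G \<and> subgroup N G \<and>
     generate G (B \<union> N) = carrier G \<and>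
     normal (B \<inter> N) (G\<lparr>carrier := N\<rparr>) \<and>
     S \<subseteq> weyl_group G (B \<inter> N) N \<and>
     (\<forall>s\<in>S. s \<noteq> B \<inter> N \<and> s <#>\<^bsub>G\<^esub> s = B \<inter> N) \<and>
     (\<forall>w\<in>weyl_group G (B \<inter> N) N. \<exists>ws. set ws \<subseteq> S \<and> coset_word_prod G (B \<inter> N) ws = w) \<and>
     (\<forall>s\<in>S. \<forall>ns\<in>s. (ns <#\<^bsub>G\<^esub> B) #>\<^bsub>G\<^esub> ns \<noteq> B) \<and>
     (\<forall>s\<in>S. \<forall>ns\<in>s. \<forall>n\<in>N.
        (ns <#\<^bsub>G\<^esub> B) #>\<^bsub>G\<^esub> n \<subseteq>
          ((B #>\<^bsub>G\<^esub> n) <#>\<^bsub>G\<^esub> B) \<union> ((B #>\<^bsub>G\<^esub> (ns \<otimes>\<^bsub>G\<^esub> n)) <#>\<^bsub>G\<^esub> B))"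

definition split_BN_pair ::
  "('a, 'b) monoid_scheme \<Rightarrow> 'a set \<Rightarrow> 'a set \<Rightarrow> 'a set \<Rightarrow> 'a set set \<Rightarrow> bool" where
  "split_BN_pair G H U N S \<longleftrightarrow>
     (let B = U <#>\<^bsub>G\<^esub> H in
       BN_pair G B N S \<and> H = B \<inter> N \<and>
       subgroup U G \<and> subgroup H G \<and>
       normal U (G\<lparr>carrier := B\<rparr>) \<and>
       U \<inter> H = {\<one>\<^bsub>G\<^esub>} \<and>
       (\<Inter>n\<in>N. (n <#\<^bsub>G\<^esub> B) #>\<^bsub>G\<^esub> inv\<^bsub>G\<^esub> n) = H)"

end

theory Submission
  imports Defs
begin

(*
  Suppose h = u1 (n0\<inverse> u n0) u2 lies in H. Then n0\<inverse> u n0 lies in B, i.e. u \<in> B \<inter> n0 B n0\<inverse>.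
  Walking down from the longest element w0 along the weak order, a descent step by a simple
  reflection s keeps a B-conjugate inside B (otherwise the axiom sBw \<subseteq> BwB \<union> BswB would identify
  two different Bruhat cells), and every element of W lies below w0. Hence u \<in> n B n\<inverse> for all
  n \<in> N, and this intersection is H, so u = 1 and h \<in> U \<inter> H = 1.
  The Coxeter combinatorics used here, namely the parity of lengths and the exchange condition
  for W, are derived from the Bruhat decomposition; that every element lies below w0 follows
  from the exchange condition by a dihedral argument.
*)

section \<open>Words in a group generated by involutions\<close>

lemma (in group) inv_mult_cancel_left [simp]:
  "x \<in> carrier G \<Longrightarrow> y \<in> carrier G \<Longrightarrow> inv x \<otimes> (x \<otimes> y) = y"
  by (simp add: m_assoc[symmetric])

lemma (in group) mult_inv_cancel_left [simp]:
  "x \<in> carrier G \<Longrightarrow> y \<in> carrier G \<Longrightarrow> x \<otimes> (inv x \<otimes> y) = y"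
  by (simp add: m_assoc[symmetric])

fun alt_word :: "'a \<Rightarrow> 'a \<Rightarrow> nat \<Rightarrow> 'a list" where
  "alt_word a b 0 = []"
| "alt_word a b (Suc n) = a # alt_word b a n"

lemma set_alt_word: "set (alt_word a b n) \<subseteq> {a, b}"
  by (induction n arbitrary: a b) auto

lemma length_alt_word [simp]: "length (alt_word a b n) = n"
  by (induction n arbitrary: a b) auto

lemma alt_word_add:
  "alt_word a b (n + m) =
     alt_word a b n @ alt_word (if even n then a else b) (if even n then b else a) m"
  by (induction n arbitrary: a b) auto

lemma alt_word_Suc_snoc: "alt_word a b (Suc n) = alt_word a b n @ [if even n then a else b]"
  using alt_word_add[of a b n 1] by simp

definition word_prod :: "('a, 'b) monoid_scheme \<Rightarrow> 'a list \<Rightarrow> 'a" where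
  "word_prod W ws = foldr (\<lambda>w acc. w \<otimes>\<^bsub>W\<^esub> acc) ws \<one>\<^bsub>W\<^esub>"

definition word_length :: "('a, 'b) monoid_scheme \<Rightarrow> 'a set \<Rightarrow> 'a \<Rightarrow> nat" where
  "word_length W S w = (LEAST k. \<exists>ws. set ws \<subseteq> S \<and> length ws = k \<and> word_prod W ws = w)"

locale involution_generated = group W for W (structure) +
  fixes S
  assumes generators_carrier: "S \<subseteq> carrier W"
    and generator_square: "s \<in> S \<Longrightarrow> s \<otimes> s = \<one>"
    and generator_neq_one: "s \<in> S \<Longrightarrow> s \<noteq> \<one>"
    and generated: "w \<in> carrier W \<Longrightarrow> \<exists>ws. set ws \<subseteq> S \<and> word_prod W ws = w"
begin

abbreviation "wprod \<equiv> word_prod W"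
abbreviation "len \<equiv> word_length W S"

lemma generator_carrier [intro, simp]: "s \<in> S \<Longrightarrow> s \<in> carrier W"
  using generators_carrier by blast

lemma wprod_Nil [simp]: "wprod [] = \<one>"
  by (simp add: word_prod_def)

lemma wprod_Cons [simp]: "wprod (x # xs) = x \<otimes> wprod xs"
  by (simp add: word_prod_def)

lemma wprod_closed [intro, simp]: "set ws \<subseteq> S \<Longrightarrow> wprod ws \<in> carrier W"
  by (induction ws) auto

lemma wprod_append: "set xs \<subseteq> S \<Longrightarrow> set ys \<subseteq> S \<Longrightarrow> wprod (xs @ ys) = wprod xs \<otimes> wprod ys"
  by (induction xs) (auto simp: m_assoc)

lemma wprod_snoc: "set xs \<subseteq> S \<Longrightarrow> y \<in> S \<Longrightarrow> wprod (xs @ [y]) = wprod xs \<otimes> y"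
  by (simp add: wprod_append)

lemma generator_cancel [simp]: "s \<in> S \<Longrightarrow> w \<in> carrier W \<Longrightarrow> s \<otimes> (s \<otimes> w) = w"
  using generator_square by (simp add: m_assoc[symmetric])

lemma generator_cancel_right [simp]: "s \<in> S \<Longrightarrow> w \<in> carrier W \<Longrightarrow> w \<otimes> s \<otimes> s = w"
  using generator_square by (simp add: m_assoc)

lemma inv_generator [simp]: "s \<in> S \<Longrightarrow> inv s = s"
  using generator_square inv_equality by blast

lemma inv_wprod: "set ws \<subseteq> S \<Longrightarrow> inv (wprod ws) = wprod (rev ws)"
proof (induction ws)
  case (Cons x ws)
  then have "inv (wprod (x # ws)) = inv (wprod ws) \<otimes> inv x"
    by (simp add: inv_mult_group)
  also have "\<dots> = wprod (rev (x # ws))"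
    using Cons by (simp add: wprod_append)
  finally show ?case .
qed simp

lemma len_obtains_word:
  assumes "w \<in> carrier W"
  obtains ws where "set ws \<subseteq> S" "length ws = len w" "wprod ws = w"
proof -
  from generated[OF assms] obtain ws where "set ws \<subseteq> S" "wprod ws = w" by blast
  then have "\<exists>k ws. set ws \<subseteq> S \<and> length ws = k \<and> wprod ws = w" by blast
  then have "\<exists>ws. set ws \<subseteq> S \<and> length ws = len w \<and> wprod ws = w"
    unfolding word_length_def by (rule LeastI_ex)
  then show thesis using that by blast
qed

lemma len_wprod_le: "set ws \<subseteq> S \<Longrightarrow> len (wprod ws) \<le> length ws"
  unfolding word_length_def by (rule Least_le) blast

lemma len_one [simp]: "len \<one> = 0"
  using len_wprod_le[of "[]"] by simp

lemma len_eq_0_iff: "w \<in> carrier W \<Longrightarrow> len w = 0 \<longleftrightarrow> w = \<one>"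
  by (metis len_obtains_word len_one length_0_conv wprod_Nil)

lemma len_mult_le:
  assumes "a \<in> carrier W" "b \<in> carrier W"
  shows "len (a \<otimes> b) \<le> len a + len b"
proof -
  obtain xs where xs: "set xs \<subseteq> S" "length xs = len a" "wprod xs = a"
    using len_obtains_word assms(1) by blast
  obtain ys where ys: "set ys \<subseteq> S" "length ys = len b" "wprod ys = b"
    using len_obtains_word assms(2) by blast
  have "len (a \<otimes> b) = len (wprod (xs @ ys))" using xs ys by (simp add: wprod_append)
  also have "\<dots> \<le> length (xs @ ys)" using xs ys by (intro len_wprod_le) auto
  finally show ?thesis using xs ys by simp
qed

lemma len_inv [simp]:
  assumes "w \<in> carrier W"
  shows "len (inv w) = len w"
proof -
  have "len (inv w) \<le> len w" if "w \<in> carrier W" for w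
    by (metis that len_obtains_word inv_wprod len_wprod_le length_rev set_rev)
  from this[OF assms] this[of "inv w"] assms show ?thesis by simp
qed

lemma len_generator [simp]: "s \<in> S \<Longrightarrow> len s = 1"
  using len_wprod_le[of "[s]"] len_eq_0_iff[of s] generator_neq_one by fastforce

lemma len_generator_mult_le:
  assumes "s \<in> S" "w \<in> carrier W"
  shows "len (s \<otimes> w) \<le> Suc (len w)" "len w \<le> Suc (len (s \<otimes> w))"
  using len_mult_le[of s w] len_mult_le[of s "s \<otimes> w"] assms by auto

definition reduced :: "'a list \<Rightarrow> bool" where
  "reduced ws \<longleftrightarrow> set ws \<subseteq> S \<and> length ws = len (wprod ws)"

lemma reduced_appendD:
  assumes "reduced (xs @ ys)"
  shows "reduced xs" "reduced ys"
proof -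
  have S: "set xs \<subseteq> S" "set ys \<subseteq> S" using assms by (auto simp: reduced_def)
  have "length xs + length ys = len (wprod xs \<otimes> wprod ys)"
    using assms S by (simp add: reduced_def wprod_append)
  also have "\<dots> \<le> len (wprod xs) + len (wprod ys)" using S by (intro len_mult_le) auto
  finally show "reduced xs" "reduced ys"
    using S len_wprod_le[of xs] len_wprod_le[of ys] by (auto simp: reduced_def)
qed

lemma reduced_ConsD: "reduced (x # xs) \<Longrightarrow> reduced xs"
  using reduced_appendD[of "[x]" xs] by simp

lemma obtain_reduced:
  assumes "w \<in> carrier W"
  obtains ws where "reduced ws" "wprod ws = w"
  using len_obtains_word[OF assms] unfolding reduced_def by metis

definition weak_le :: "'a \<Rightarrow> 'a \<Rightarrow> bool" where
  "weak_le c v \<longleftrightarrow> (\<exists>d \<in> carrier W. v = d \<otimes> c \<and> len d + len c = len v)"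

lemma weak_leI:
  assumes "c \<in> carrier W" "d \<in> carrier W" "v = d \<otimes> c" "len d + len c \<le> len v"
  shows "weak_le c v"
  using assms len_mult_le[of d c] unfolding weak_le_def by force

lemma weak_le_trans:
  assumes cv: "weak_le c v" and vu: "weak_le v u" and c: "c \<in> carrier W"
  shows "weak_le c u"
proof -
  obtain d where d: "d \<in> carrier W" "v = d \<otimes> c" "len d + len c = len v"
    using cv unfolding weak_le_def by blast
  obtain e where e: "e \<in> carrier W" "u = e \<otimes> v" "len e + len v = len u"
    using vu unfolding weak_le_def by blast
  show ?thesis
    using weak_leI[of c "e \<otimes> d" u] len_mult_le[of e d] c d e by (simp add: m_assoc)
qed

lemma weak_le_descent_induct:
  assumes cv: "weak_le c v" and c: "c \<in> carrier W" and v: "v \<in> carrier W" and "P v"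
    and step: "\<And>a s. a \<in> carrier W \<Longrightarrow> s \<in> S \<Longrightarrow> P a \<Longrightarrow> len (s \<otimes> a) < len a \<Longrightarrow> P (s \<otimes> a)"
  shows "P c"
proof -
  obtain d where d: "d \<in> carrier W" "v = d \<otimes> c" "len d + len c = len v"
    using cv unfolding weak_le_def by blast
  obtain ds where ds: "reduced ds" "wprod ds = d" using obtain_reduced d by blast
  have "\<And>v. set ds \<subseteq> S \<Longrightarrow> v \<in> carrier W \<Longrightarrow> P v \<Longrightarrow> v = wprod ds \<otimes> c
      \<Longrightarrow> length ds + len c = len v \<Longrightarrow> P c"
  proof (induction ds arbitrary: v)
    case Nil
    then show ?case using c by simp
  next
    case (Cons x ds)
    have x: "x \<in> S" "set ds \<subseteq> S" using Cons.prems by auto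
    have e: "x \<otimes> v = wprod ds \<otimes> c" using Cons.prems x c by (simp add: m_assoc)
    have le: "len (x \<otimes> v) \<le> length ds + len c"
      using e len_mult_le[of "wprod ds" c] len_wprod_le[OF x(2)] x c by simp
    then have "len (x \<otimes> v) < len v" using Cons.prems by simp
    then have "P (x \<otimes> v)" using step Cons.prems x by blast
    moreover have "length ds + len c = len (x \<otimes> v)"
      using le len_generator_mult_le(2)[OF x(1) Cons.prems(2)] Cons.prems by simp
    ultimately show ?case using Cons.IH[of "x \<otimes> v"] e x c Cons.prems by simp
  qed
  then show ?thesis using ds d v \<open>P v\<close> by (simp add: reduced_def)
qed

lemma exchange_of_switch:
  assumes switch: "\<And>w s t. w \<in> carrier W \<Longrightarrow> s \<in> S \<Longrightarrow> t \<in> S \<Longrightarrow> len w \<le> len (s \<otimes> w)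
      \<Longrightarrow> len (s \<otimes> (w \<otimes> t)) < len (w \<otimes> t) \<Longrightarrow> s \<otimes> w = w \<otimes> t"
    and s: "s \<in> S"
  shows "set ws \<subseteq> S \<Longrightarrow> len (s \<otimes> wprod ws) < len (wprod ws) \<Longrightarrow>
    \<exists>i < length ws. s \<otimes> wprod ws = wprod (take i ws @ drop (Suc i) ws)"
proof (induction ws rule: rev_induct)
  case Nil
  then show ?case using s by simp
next
  case (snoc t xs)
  have xs: "set xs \<subseteq> S" and t: "t \<in> S" using snoc.prems by auto
  have prod: "wprod (xs @ [t]) = wprod xs \<otimes> t" using wprod_snoc[OF xs t] .
  show ?case
  proof (cases "len (s \<otimes> wprod xs) < len (wprod xs)")
    case True
    then obtain i where i: "i < length xs" "s \<otimes> wprod xs = wprod (take i xs @ drop (Suc i) xs)"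
      using snoc.IH xs by blast
    have "set (take i xs @ drop (Suc i) xs) \<subseteq> S" using xs set_take_subset set_drop_subset by fastforce
    then have "s \<otimes> wprod (xs @ [t]) = wprod ((take i xs @ drop (Suc i) xs) @ [t])"
      using i t xs s by (simp only: wprod_snoc prod m_assoc[symmetric] generator_carrier wprod_closed)
    also have "(take i xs @ drop (Suc i) xs) @ [t] = take i (xs @ [t]) @ drop (Suc i) (xs @ [t])"
      using i by simp
    finally have "s \<otimes> wprod (xs @ [t]) = wprod (take i (xs @ [t]) @ drop (Suc i) (xs @ [t]))" .
    then show ?thesis using i(1) by (intro exI[of _ i]) simp
  next
    case False
    then have "s \<otimes> wprod xs = wprod xs \<otimes> t"
      using switch[OF wprod_closed[OF xs] s t] snoc.prems(2) by (simp add: prod)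
    then have "s \<otimes> wprod (xs @ [t]) = wprod xs" using xs s t by (simp add: prod m_assoc[symmetric])
    then show ?thesis by (intro exI[of _ "length xs"]) simp
  qed
qed

end

section \<open>Groups with the exchange condition\<close>

locale exchange_condition = involution_generated +
  assumes len_generator_mult_neq: "s \<in> S \<Longrightarrow> w \<in> carrier W \<Longrightarrow> len (s \<otimes> w) \<noteq> len w"
    and exchange: "reduced ws \<Longrightarrow> s \<in> S \<Longrightarrow> len (s \<otimes> wprod ws) < len (wprod ws) \<Longrightarrow>
        \<exists>i < length ws. s \<otimes> wprod ws = wprod (take i ws @ drop (Suc i) ws)"
begin

lemma len_generator_mult_cases:
  assumes "s \<in> S" "w \<in> carrier W"
  shows "len (s \<otimes> w) = Suc (len w) \<or> len w = Suc (len (s \<otimes> w))"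
  using len_generator_mult_le[OF assms] len_generator_mult_neq[OF assms] by linarith

lemma set_delete_subset: "set (take i ws @ drop (Suc i) ws) \<subseteq> set ws"
  using set_take_subset set_drop_subset by fastforce

lemma exists_reduced_subword:
  "set ws \<subseteq> S \<Longrightarrow> \<exists>ws'. set ws' \<subseteq> set ws \<and> reduced ws' \<and> wprod ws' = wprod ws"
proof (induction ws)
  case Nil
  then show ?case by (auto simp: reduced_def)
next
  case (Cons x ws)
  then obtain ws' where ws': "set ws' \<subseteq> set ws" "reduced ws'" "wprod ws' = wprod ws" by auto
  have x: "x \<in> S" and S': "set ws' \<subseteq> S" using Cons ws' by auto
  show ?case
  proof (cases "len (x \<otimes> wprod ws') = Suc (len (wprod ws'))")
    case True
    then have "reduced (x # ws')" using ws' x S' by (auto simp: reduced_def)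
    then show ?thesis using ws' by (intro exI[of _ "x # ws'"]) auto
  next
    case False
    then have "len (x \<otimes> wprod ws') < len (wprod ws')"
      using len_generator_mult_cases[of x "wprod ws'"] x S' by auto
    from exchange[OF ws'(2) x this] obtain i where i: "i < length ws'"
      "x \<otimes> wprod ws' = wprod (take i ws' @ drop (Suc i) ws')" by blast
    let ?v = "take i ws' @ drop (Suc i) ws'"
    have "length ?v = len (wprod ws') - 1" using i ws'(2) by (simp add: reduced_def)
    also have "\<dots> = len (wprod ?v)"
      using len_generator_mult_cases[of x "wprod ws'"] x S' False i by auto
    finally have "reduced ?v" using set_delete_subset[of i ws'] S' by (auto simp: reduced_def)
    then show ?thesis using i ws' set_delete_subset[of i ws'] by (intro exI[of _ ?v]) auto
  qed
qed

text \<open>\<open>wprod (rev xs @ s # xs)\<close> is the conjugate of \<open>s\<close> by \<open>wprod xs\<close>: the second case is an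
  exchange happening inside \<open>ys\<close>.\<close>

lemma exchange_append:
  assumes red: "reduced (xs @ ys)" and s: "s \<in> S"
    and desc: "len (s \<otimes> wprod (xs @ ys)) < len (wprod (xs @ ys))"
  shows "len (s \<otimes> wprod xs) < length xs \<or> len (wprod (rev xs @ s # xs) \<otimes> wprod ys) < length ys"
proof -
  have xs: "set xs \<subseteq> S" and ys: "set ys \<subseteq> S" using red by (auto simp: reduced_def)
  obtain i where i: "i < length (xs @ ys)"
    and e: "s \<otimes> wprod (xs @ ys) = wprod (take i (xs @ ys) @ drop (Suc i) (xs @ ys))"
    using exchange[OF red s desc] by blast
  show ?thesis
  proof (cases "i < length xs")
    case True
    let ?v = "take i xs @ drop (Suc i) xs"
    have v: "set ?v \<subseteq> S" using xs set_delete_subset[of i xs] by blast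
    have "s \<otimes> wprod xs \<otimes> wprod ys = wprod ?v \<otimes> wprod ys"
      using e True xs ys v s by (simp add: wprod_append m_assoc)
    then have "s \<otimes> wprod xs = wprod ?v" using xs ys v s by (metis m_closed generator_carrier right_cancel wprod_closed)
    then have "len (s \<otimes> wprod xs) \<le> length ?v" using len_wprod_le[OF v] by simp
    then show ?thesis using True by auto
  next
    case False
    let ?v = "take (i - length xs) ys @ drop (Suc (i - length xs)) ys"
    have v: "set ?v \<subseteq> S" using ys set_delete_subset[of _ ys] by blast
    have "take i (xs @ ys) @ drop (Suc i) (xs @ ys) = xs @ ?v"
      using False by (simp add: Suc_diff_le)
    then have "s \<otimes> (wprod xs \<otimes> wprod ys) = wprod xs \<otimes> wprod ?v"
      using e xs ys v by (simp add: wprod_append)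
    then have "wprod (rev xs @ s # xs) \<otimes> wprod ys = wprod ?v"
      using xs ys v s by (simp add: wprod_append inv_wprod[symmetric] m_assoc)
    then have "len (wprod (rev xs @ s # xs) \<otimes> wprod ys) \<le> length ?v"
      using len_wprod_le[OF v] by simp
    then show ?thesis using False i by auto
  qed
qed

lemma len_mult_min_coset_rep:
  assumes J: "J \<subseteq> S" and cs: "cs \<in> carrier W"
    and min: "\<And>ws. set ws \<subseteq> J \<Longrightarrow> len cs \<le> len (wprod ws \<otimes> cs)"
  shows "reduced us \<Longrightarrow> set us \<subseteq> J \<Longrightarrow> len (wprod us \<otimes> cs) = length us + len cs"
proof (induction us)
  case Nil
  then show ?case using cs by simp
next
  case (Cons x us)
  have x: "x \<in> S" and usJ: "set us \<subseteq> J" and usS: "set us \<subseteq> S" using Cons.prems J by auto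
  have IH: "len (wprod us \<otimes> cs) = length us + len cs"
    using Cons.IH reduced_ConsD[OF Cons.prems(1)] usJ by blast
  obtain rc where rc: "reduced rc" "wprod rc = cs" using obtain_reduced cs by blast
  have rcS: "set rc \<subseteq> S" using rc by (simp add: reduced_def)
  have z: "wprod (us @ rc) = wprod us \<otimes> cs" using usS rcS rc by (simp add: wprod_append)
  have red: "reduced (us @ rc)" using usS rcS IH z rc by (simp add: reduced_def)
  show ?case
  proof (rule ccontr)
    assume "\<not> ?case"
    then have "len (x \<otimes> wprod (us @ rc)) < len (wprod (us @ rc))"
      using len_generator_mult_cases[of x "wprod us \<otimes> cs"] x usS cs IH z by (auto simp: m_assoc)
    then consider "len (x \<otimes> wprod us) < length us"
      | "len (wprod (rev us @ x # us) \<otimes> cs) < len cs"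
      using exchange_append[OF red x] rc by (auto simp: reduced_def)
    then show False
    proof cases
      case 1
      then show False using Cons.prems(1) by (simp add: reduced_def)
    next
      case 2
      then show False using min[of "rev us @ x # us"] Cons.prems(2) by auto
    qed
  qed
qed

lemma min_len_in_parabolic_coset:
  assumes J: "J \<subseteq> S" and c: "c \<in> carrier W"
    and asc: "\<And>s. s \<in> J \<Longrightarrow> len c < len (s \<otimes> c)"
    and ws: "set ws \<subseteq> J"
  shows "len c \<le> len (wprod ws \<otimes> c)"
proof -
  obtain ws0 where ws0: "set ws0 \<subseteq> J"
    and min0: "\<And>ws. set ws \<subseteq> J \<Longrightarrow> len (wprod ws0 \<otimes> c) \<le> len (wprod ws \<otimes> c)"
    using ex_has_least_nat[of "\<lambda>ws. set ws \<subseteq> J" "[]" "\<lambda>ws. len (wprod ws \<otimes> c)"] by auto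
  define cs where "cs = wprod ws0 \<otimes> c"
  have ws0S: "set ws0 \<subseteq> S" using ws0 J by auto
  have cs_carrier: "cs \<in> carrier W" using ws0S c by (simp add: cs_def)
  have min: "len cs \<le> len (wprod ws \<otimes> cs)" if "set ws \<subseteq> J" for ws
    using min0[of "ws @ ws0"] that ws0 J c by (auto simp: cs_def wprod_append m_assoc)
  obtain ws1 where ws1: "set ws1 \<subseteq> set (rev ws0)" "reduced ws1" "wprod ws1 = wprod (rev ws0)"
    using exists_reduced_subword[of "rev ws0"] ws0S by auto
  have ws1J: "set ws1 \<subseteq> J" using ws1 ws0 by auto
  have c_eq: "c = wprod ws1 \<otimes> cs"
    using ws1 ws0S c by (simp add: cs_def inv_wprod[symmetric] m_assoc[symmetric])
  have "ws1 = []"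
  proof (rule ccontr)
    assume "ws1 \<noteq> []"
    then obtain x ws1' where xw: "ws1 = x # ws1'" by (cases ws1) auto
    have x: "x \<in> J" "x \<in> S" and J': "set ws1' \<subseteq> J" using xw ws1J J by auto
    have "x \<otimes> c = wprod ws1' \<otimes> cs"
      using c_eq xw x ws1J J cs_carrier by (auto simp: m_assoc[symmetric])
    then have "len (x \<otimes> c) < len c"
      using len_mult_min_coset_rep[OF J cs_carrier min] ws1(2) ws1J J' c_eq xw
      by (metis reduced_ConsD length_Cons lessI add_less_mono1)
    then show False using asc[OF x(1)] by simp
  qed
  then have "c = cs" using c_eq cs_carrier by simp
  then show ?thesis using min[OF ws] by simp
qed

lemma set_alt_word_generators: "p \<in> S \<Longrightarrow> q \<in> S \<Longrightarrow> set (alt_word p q n) \<subseteq> S"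
  using set_alt_word[of p q n] by auto

lemma braid_length_eq:
  assumes p: "p \<in> S" and q: "q \<in> S" and red: "reduced (alt_word p q k)"
    and m: "0 < m" "m \<le> k" and braid: "wprod (alt_word q p m) = wprod (alt_word p q m)"
  shows "m = k"
proof (rule ccontr)
  assume "m \<noteq> k"
  then have "alt_word p q k = alt_word p q (Suc m) @ alt_word p q (k - Suc m) \<or>
             alt_word p q k = alt_word p q (Suc m) @ alt_word q p (k - Suc m)"
    using alt_word_add[of p q "Suc m" "k - Suc m"] m by (auto split: if_splits)
  then have red': "reduced (alt_word p q (Suc m))" using red reduced_appendD by metis
  obtain m' where m': "m = Suc m'" using m by (cases m) auto
  have "wprod (alt_word p q (Suc m)) = p \<otimes> (p \<otimes> wprod (alt_word q p m'))"
    using braid m' by simp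
  also have "\<dots> = wprod (alt_word q p m')"
    using p q set_alt_word_generators[of q p m'] by simp
  finally show False
    using red' m' len_wprod_le[OF set_alt_word_generators[OF q p, of m']] by (simp add: reduced_def)
qed

lemma alt_word_braid:
  assumes p: "p \<in> S" and q: "q \<in> S" and red: "reduced (alt_word p q k)"
    and desc: "len (q \<otimes> wprod (alt_word p q k)) < k"
  shows "wprod (alt_word p q k) = wprod (alt_word q p k)"
proof -
  obtain i where i: "i < k"
    and e: "q \<otimes> wprod (alt_word p q k) =
              wprod (take i (alt_word p q k) @ drop (Suc i) (alt_word p q k))"
    using exchange[OF red q] desc red by (auto simp: reduced_def)
  define z where "z = (if even i then p else q)"
  define z' where "z' = (if even i then q else p)"
  have zS: "z \<in> S" "z' \<in> S" using p q by (auto simp: z_def z'_def)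
  define P where "P = wprod (alt_word p q i)"
  define R where "R = wprod (alt_word z' z (k - Suc i))"
  have PR: "P \<in> carrier W" "R \<in> carrier W"
    using set_alt_word_generators p q zS by (auto simp: P_def R_def)
  have "k - i = Suc (k - Suc i)" using i by simp
  then have split: "alt_word p q k = alt_word p q i @ z # alt_word z' z (k - Suc i)"
    using alt_word_add[of p q i "k - i"] i by (simp add: z_def z'_def)
  have "q \<otimes> (P \<otimes> (z \<otimes> R)) = P \<otimes> R"
    using e i set_alt_word_generators p q zS
    by (simp add: split P_def R_def wprod_append)
  then have qPz: "q \<otimes> P \<otimes> z = P"
    using PR zS q by (metis m_assoc m_closed generator_carrier right_cancel)
  have "wprod (alt_word q p (Suc i)) = q \<otimes> P \<otimes> z \<otimes> z"
    using PR zS q by (simp add: P_def)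
  also have "\<dots> = wprod (alt_word p q (Suc i))"
    using qPz alt_word_Suc_snoc[of p q i] set_alt_word_generators[OF p q] zS
    by (simp add: wprod_append P_def z_def)
  finally have "wprod (alt_word q p (Suc i)) = wprod (alt_word p q (Suc i))" .
  moreover from braid_length_eq[OF p q red _ _ this] i have "Suc i = k" by simp
  ultimately show ?thesis by simp
qed

text \<open>Here \<open>c\<close> is minimal in its \<open>\<langle>p, q\<rangle>\<close>-coset and the alternating element above it cannot
  be lengthened, so it is the top of the coset: either the braid relation lets it end in the
  other generator, or the exchange would produce an element of the coset shorter than \<open>c\<close>.\<close>

lemma weak_le_alt_word_top:
  assumes p: "p \<in> S" and q: "q \<in> S" and c: "c \<in> carrier W"
    and asc: "len c < len (p \<otimes> c)" "len c < len (q \<otimes> c)"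
    and k: "0 < k" and len_a: "len (wprod (alt_word p q k) \<otimes> c) = len c + k"
    and desc: "len (q \<otimes> (wprod (alt_word p q k) \<otimes> c)) < len c + k"
  shows "weak_le (last (alt_word q p k) \<otimes> c) (wprod (alt_word p q k) \<otimes> c)"
proof -
  let ?al = "alt_word p q k"
  have alS: "set ?al \<subseteq> S" "set (alt_word q p k) \<subseteq> S" using set_alt_word_generators p q by auto
  obtain rc where rc: "reduced rc" "wprod rc = c" using obtain_reduced c by blast
  have rcS: "set rc \<subseteq> S" using rc by (simp add: reduced_def)
  have prod: "wprod (?al @ rc) = wprod ?al \<otimes> c" using alS rcS rc by (simp add: wprod_append)
  have red: "reduced (?al @ rc)" using alS rcS prod len_a rc by (simp add: reduced_def)
  consider "len (q \<otimes> wprod ?al) < k" | "len (wprod (rev ?al @ q # ?al) \<otimes> c) < len c"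
    using exchange_append[OF red q] desc len_a prod rc alS c by (auto simp: reduced_def m_assoc)
  then show ?thesis
  proof cases
    case 1
    have red_al: "reduced ?al" using red reduced_appendD by blast
    define pre where "pre = butlast (alt_word q p k)"
    define t where "t = last (alt_word q p k)"
    have "alt_word q p k \<noteq> []" using k by (cases k) auto
    then have split: "alt_word q p k = pre @ [t]" by (simp add: pre_def t_def)
    have preS: "set pre \<subseteq> S" and t: "t \<in> S" using alS(2) split by auto
    have "wprod ?al = wprod pre \<otimes> t"
      using alt_word_braid[OF p q red_al] 1 split preS t by (simp add: wprod_append)
    then have a_eq: "wprod ?al \<otimes> c = wprod pre \<otimes> (t \<otimes> c)"
      using preS t c by (simp add: m_assoc)
    have "length pre = k - 1" by (simp add: pre_def)
    then have "len (wprod pre) + len (t \<otimes> c) \<le> len c + k"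
      using len_wprod_le[OF preS] len_generator_mult_le(1)[OF t c] k by linarith
    then show ?thesis
      unfolding t_def[symmetric] using weak_leI[OF _ _ a_eq] preS t c len_a by simp
  next
    case 2
    have "set (rev ?al @ q # ?al) \<subseteq> {p, q}" using set_alt_word[of p q k] by auto
    then show ?thesis
      using min_len_in_parabolic_coset[of "{p, q}" c] 2 p q c asc by fastforce
  qed
qed

lemma last_alt_word: "last (alt_word a b (Suc n)) = (if even n then a else b)"
  using alt_word_Suc_snoc[of a b n] by simp

lemma weak_le_last_generator:
  assumes cv: "weak_le c v" and c: "c \<in> carrier W" and ne: "c \<noteq> v"
  obtains t where "t \<in> S" "weak_le (t \<otimes> c) v" "len (t \<otimes> c) = Suc (len c)"
proof -
  obtain d where d: "d \<in> carrier W" "v = d \<otimes> c" "len d + len c = len v"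
    using cv unfolding weak_le_def by blast
  obtain rd where rd: "reduced rd" "wprod rd = d" using obtain_reduced d by blast
  have "rd \<noteq> []" using rd d ne c by auto
  then obtain rd' t where rdt: "rd = rd' @ [t]" by (cases rd rule: rev_cases) auto
  have rd'S: "set rd' \<subseteq> S" and t: "t \<in> S" using rd rdt by (auto simp: reduced_def)
  have "d = wprod rd' \<otimes> t" using rd rdt rd'S t by (simp add: wprod_append)
  then have v_eq: "v = wprod rd' \<otimes> (t \<otimes> c)" using d rd'S t c by (simp add: m_assoc)
  have len_d: "len d = Suc (length rd')" using rd rdt by (simp add: reduced_def)
  have "len v \<le> length rd' + len (t \<otimes> c)"
    using v_eq len_mult_le[of "wprod rd'" "t \<otimes> c"] len_wprod_le[OF rd'S] rd'S t c by simp
  then have len_tc: "len (t \<otimes> c) = Suc (len c)"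
    using len_generator_mult_le(1)[OF t c] d(3) len_d by linarith
  have "weak_le (t \<otimes> c) v"
    using weak_leI[OF _ _ v_eq] len_wprod_le[OF rd'S] len_tc len_d d(3) rd'S t c by simp
  then show thesis using that t len_tc by blast
qed

text \<open>If the last letter \<open>t\<close> of \<open>v\<^sub>0 c\<^sup>-\<^sup>1\<close> differs from \<open>s\<close>, climb the alternating
  \<open>s,t\<close>-chain above \<open>c\<close> inside the interval as far as possible; its top lies above \<open>sc\<close>.\<close>

lemma weak_le_longest_generator_mult:
  assumes v0: "v0 \<in> carrier W" and longest: "\<And>w. w \<in> carrier W \<Longrightarrow> len w \<le> len v0"
  shows "weak_le c v0 \<Longrightarrow> c \<in> carrier W \<Longrightarrow> s \<in> S \<Longrightarrow> len c < len (s \<otimes> c)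
    \<Longrightarrow> weak_le (s \<otimes> c) v0"
proof (induction "len v0 - len c" arbitrary: c s rule: less_induct)
  case less
  note cv = less.prems(1) and c = less.prems(2) and s = less.prems(3) and asc_s = less.prems(4)
  have "c \<noteq> v0" using longest[of "s \<otimes> c"] asc_s s c by auto
  then obtain t where t: "t \<in> S" "weak_le (t \<otimes> c) v0" and asc_t: "len (t \<otimes> c) = Suc (len c)"
    using weak_le_last_generator[OF cv c] by blast
  show ?case
  proof (cases "t = s")
    case True
    then show ?thesis using t by simp
  next
    case False
    define P where "P k = (if even k then s else t)" for k :: nat
    define Q where "Q k = (if even k then t else s)" for k :: nat
    have PQ: "P k \<in> S" "Q k \<in> S" for k using s t by (auto simp: P_def Q_def)
    define A where "A k = wprod (alt_word (P k) (Q k) k) \<otimes> c" for k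
    have A: "A k \<in> carrier W" for k using set_alt_word_generators PQ c by (simp add: A_def)
    have A_Suc: "A (Suc k) = Q k \<otimes> A k" for k
      using set_alt_word_generators[OF s t(1)] set_alt_word_generators[OF t(1) s] s t c
      by (simp add: A_def P_def Q_def m_assoc)
    define good where "good k \<longleftrightarrow> weak_le (A k) v0 \<and> len (A k) = len c + k" for k
    have good_1: "good 1" using t asc_t c by (simp add: good_def A_def P_def)
    have "good k \<Longrightarrow> k \<le> len v0" for k using longest[OF A, of k] by (simp add: good_def)
    then have fin: "finite {k. good k}" by (meson finite_nat_set_iff_bounded_le mem_Collect_eq)
    define K where "K = Max {k. good k}"
    have good_K: "good K" and K_max: "\<And>k. good k \<Longrightarrow> k \<le> K"
      using fin good_1 Max_in[OF fin] by (auto simp: K_def)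
    have K: "0 < K" using K_max[OF good_1] by simp
    have len_AK: "len (A K) = len c + K" using good_K by (simp add: good_def)
    have desc: "len (Q K \<otimes> A K) < len c + K"
    proof (rule ccontr)
      assume "\<not> ?thesis"
      then have up: "len (Q K \<otimes> A K) = Suc (len (A K))"
        using len_generator_mult_cases[OF PQ(2) A] len_AK by fastforce
      have "len v0 - len (A K) < len v0 - len c" using len_AK K longest[OF A[of K]] by simp
      then have "weak_le (Q K \<otimes> A K) v0"
        using less.hyps good_K A PQ up by (auto simp: good_def)
      then have "good (Suc K)" using A_Suc up len_AK by (simp add: good_def)
      then show False using K_max by fastforce
    qed
    have asc: "len c < len (P K \<otimes> c)" "len c < len (Q K \<otimes> c)"
      using asc_s asc_t by (auto simp: P_def Q_def)
    have "weak_le (last (alt_word (Q K) (P K) K) \<otimes> c) (A K)"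
      using weak_le_alt_word_top[OF PQ(1)[of K] PQ(2)[of K] c asc K] desc len_AK
      unfolding A_def by simp
    moreover have "last (alt_word (Q K) (P K) K) = s"
      using K last_alt_word[of "Q K" "P K" "K - 1"] by (auto simp: P_def Q_def)
    ultimately have "weak_le (s \<otimes> c) (A K)" by simp
    then show ?thesis using weak_le_trans good_K s c by (auto simp: good_def)
  qed
qed

lemma weak_le_longest:
  assumes v0: "v0 \<in> carrier W" and longest: "\<And>w. w \<in> carrier W \<Longrightarrow> len w \<le> len v0"
  shows "c \<in> carrier W \<Longrightarrow> weak_le c v0"
proof (induction "len c" arbitrary: c)
  case 0
  then have "c = \<one>" using len_eq_0_iff by simp
  then show ?case using v0 by (intro weak_leI[of _ v0]) auto
next
  case (Suc n)
  obtain ws where ws: "reduced ws" "wprod ws = c" using obtain_reduced Suc.prems by blast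
  then obtain x ws' where xw: "ws = x # ws'" using Suc.hyps by (cases ws) (auto simp: reduced_def)
  have x: "x \<in> S" "set ws' \<subseteq> S" using ws xw by (auto simp: reduced_def)
  have "reduced ws'" using reduced_ConsD ws xw by blast
  then have len': "len (wprod ws') = n" using ws xw Suc.hyps by (simp add: reduced_def)
  then show ?case
    using weak_le_longest_generator_mult[OF v0 longest Suc.hyps(1), of "wprod ws'" x] x ws xw Suc.hyps
    by simp
qed

end


section \<open>BN-pairs\<close>

lemma r_coset_carrier_update: "A #>\<^bsub>M\<lparr>carrier := Y\<rparr>\<^esub> a = A #>\<^bsub>M\<^esub> a"
  by (simp add: r_coset_def)

lemma set_mult_carrier_update: "A <#>\<^bsub>M\<lparr>carrier := Y\<rparr>\<^esub> C = A <#>\<^bsub>M\<^esub> C"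
  by (simp add: set_mult_def)

locale bn_pair = group G for G (structure) +
  fixes B N H :: "'a set" and S :: "'a set set"
  assumes subgroup_B: "subgroup B G" and subgroup_N: "subgroup N G" and H_eq: "H = B \<inter> N"
    and normal_H: "normal H (G\<lparr>carrier := N\<rparr>)"
    and generators_Weyl: "S \<subseteq> weyl_group G H N"
    and generator_neq_H: "s \<in> S \<Longrightarrow> s \<noteq> H"
    and generator_square: "s \<in> S \<Longrightarrow> s <#> s = H"
    and generated: "w \<in> weyl_group G H N \<Longrightarrow> \<exists>ws. set ws \<subseteq> S \<and> coset_word_prod G H ws = w"
    and generator_conj_B_neq: "s \<in> S \<Longrightarrow> ns \<in> s \<Longrightarrow> (ns <# B) #> ns \<noteq> B"
    and generator_double_coset: "s \<in> S \<Longrightarrow> ns \<in> s \<Longrightarrow> n \<in> N \<Longrightarrow>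
       (ns <# B) #> n \<subseteq> ((B #> n) <#> B) \<union> ((B #> (ns \<otimes> n)) <#> B)"
begin

lemma subgroup_H: "subgroup H G"
  unfolding H_eq by (rule subgroups_Inter_pair[OF subgroup_B subgroup_N])

sublocale B: subgroup B G by (rule subgroup_B)
sublocale N: subgroup N G by (rule subgroup_N)
sublocale H: subgroup H G by (rule subgroup_H)

lemma H_subset_B: "H \<subseteq> B" and H_subset_N: "H \<subseteq> N"
  by (auto simp: H_eq)

abbreviation "Weyl \<equiv> (G\<lparr>carrier := N\<rparr>) Mod H"

lemma carrier_Weyl: "carrier Weyl = weyl_group G H N"
  by (auto simp: FactGroup_def RCOSETS_def weyl_group_def r_coset_carrier_update)

lemma mult_Weyl: "x \<otimes>\<^bsub>Weyl\<^esub> y = x <#> y"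
  by (simp add: FactGroup_def set_mult_carrier_update)

lemma one_Weyl [simp]: "\<one>\<^bsub>Weyl\<^esub> = H"
  by (simp add: FactGroup_def)

lemma rcos_mult_rcos: "a \<in> N \<Longrightarrow> b \<in> N \<Longrightarrow> (H #> a) <#> (H #> b) = H #> (a \<otimes> b)"
  using normal.rcos_sum[OF normal_H, of a b] by (simp add: r_coset_carrier_update set_mult_carrier_update)

lemma rcos_eq_iff: "a \<in> carrier G \<Longrightarrow> b \<in> carrier G \<Longrightarrow> H #> a = H #> b \<longleftrightarrow> a \<otimes> inv b \<in> H"
  by (metis is_group rcos_self repr_independence subgroup_H subgroup.rcos_module)

lemma rcos_eq_H_iff: "a \<in> carrier G \<Longrightarrow> H #> a = H \<longleftrightarrow> a \<in> H"
  by (metis rcos_self subgroup_H subgroup.rcos_const is_group)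

lemma rcos_in_Weyl: "a \<in> N \<Longrightarrow> H #> a \<in> carrier Weyl"
  by (auto simp: carrier_Weyl weyl_group_def)

lemma Weyl_obtain_rcos:
  assumes "w \<in> carrier Weyl" obtains a where "a \<in> N" "w = H #> a"
  using assms by (auto simp: carrier_Weyl weyl_group_def)

lemma generator_rep:
  assumes "s \<in> S" "ns \<in> s"
  shows generator_rep_in_N: "ns \<in> N" and generator_eq_rcos: "s = H #> ns"
proof -
  obtain a where a: "a \<in> N" "s = H #> a" using assms generators_Weyl by (auto simp: weyl_group_def)
  then obtain h where h: "h \<in> H" "ns = h \<otimes> a" using assms by (auto simp: r_coset_def)
  then show "ns \<in> N" using a H_subset_N N.m_closed by blast
  show "s = H #> ns" using a assms repr_independence[OF _ _ subgroup_H] N.mem_carrier by blast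
qed

lemma generator_obtain_rep:
  assumes "s \<in> S" obtains ns where "ns \<in> s"
proof -
  obtain a where "a \<in> N" "s = H #> a" using assms generators_Weyl by (auto simp: weyl_group_def)
  then show thesis using that rcos_self[OF _ subgroup_H] N.mem_carrier by blast
qed

lemma word_prod_Weyl: "word_prod Weyl ws = coset_word_prod G H ws"
  by (simp add: word_prod_def coset_word_prod_def)

lemma word_length_Weyl: "word_length Weyl S = weyl_length G H S"
  by (simp add: word_length_def weyl_length_def word_prod_Weyl fun_eq_iff)

sublocale Weyl: involution_generated Weyl S
proof (intro involution_generated.intro involution_generated_axioms.intro)
  show "group Weyl" using normal.factorgroup_is_group[OF normal_H] .
  show "S \<subseteq> carrier Weyl" using generators_Weyl carrier_Weyl by simp
  show "\<And>s. s \<in> S \<Longrightarrow> s \<otimes>\<^bsub>Weyl\<^esub> s = \<one>\<^bsub>Weyl\<^esub>" using generator_square by (simp add: mult_Weyl)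
  show "\<And>s. s \<in> S \<Longrightarrow> s \<noteq> \<one>\<^bsub>Weyl\<^esub>" using generator_neq_H by simp
  show "\<And>w. w \<in> carrier Weyl \<Longrightarrow> \<exists>ws. set ws \<subseteq> S \<and> word_prod Weyl ws = w"
    using generated carrier_Weyl word_prod_Weyl by simp
qed

abbreviation nlen :: "'a \<Rightarrow> nat" where "nlen a \<equiv> Weyl.len (H #> a)"

lemma rcos_generator_mult:
  assumes "s \<in> S" "ns \<in> s" "a \<in> N"
  shows "H #> (ns \<otimes> a) = s \<otimes>\<^bsub>Weyl\<^esub> (H #> a)"
  using rcos_mult_rcos[of ns a] generator_rep[OF assms(1,2)] assms(3) by (simp add: mult_Weyl)

lemma rcos_mult_generator:
  assumes "s \<in> S" "ns \<in> s" "a \<in> N"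
  shows "H #> (a \<otimes> ns) = (H #> a) \<otimes>\<^bsub>Weyl\<^esub> s"
  using rcos_mult_rcos[of a ns] generator_rep[OF assms(1,2)] assms(3) by (simp add: mult_Weyl)

lemma rcos_generator_mult_neq:
  assumes "s \<in> S" "ns \<in> s" "a \<in> N"
  shows "H #> (ns \<otimes> a) \<noteq> H #> a"
proof
  assume "H #> (ns \<otimes> a) = H #> a"
  then have "s \<otimes>\<^bsub>Weyl\<^esub> (H #> a) = H #> a" using rcos_generator_mult[OF assms] by simp
  then have "s = \<one>\<^bsub>Weyl\<^esub>"
    using Weyl.r_cancel_one[OF rcos_in_Weyl[OF assms(3)] Weyl.generator_carrier[OF assms(1)]] by blast
  then show False using generator_neq_H assms(1) by simp
qed

lemma rcos_mult_cancel_left: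
  assumes "m \<in> N" "a \<in> N" "b \<in> N" "H #> (m \<otimes> a) = H #> (m \<otimes> b)"
  shows "H #> a = H #> b"
proof -
  have "(H #> m) \<otimes>\<^bsub>Weyl\<^esub> (H #> a) = (H #> m) \<otimes>\<^bsub>Weyl\<^esub> (H #> b)"
    using assms rcos_mult_rcos by (simp add: mult_Weyl)
  then show ?thesis using Weyl.l_cancel assms rcos_in_Weyl by blast
qed

lemma generator_rep_square_in_H:
  assumes "s \<in> S" "ns \<in> s"
  shows "ns \<otimes> ns \<in> H"
proof -
  have n: "ns \<in> N" using generator_rep_in_N[OF assms] .
  have "H #> (ns \<otimes> ns) = s <#> s" using rcos_mult_rcos[OF n n] generator_rep[OF assms] by simp
  then show ?thesis using generator_square assms rcos_eq_H_iff n by auto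
qed

lemma inv_generator_rep:
  assumes "s \<in> S" "ns \<in> s"
  shows "inv ns \<in> s"
proof -
  have n: "ns \<in> N" "ns \<in> carrier G" using generator_rep assms by auto
  have "inv ns \<otimes> inv ns \<in> H"
    using generator_rep_square_in_H[OF assms] n by (simp add: inv_mult_group[symmetric])
  then have "inv ns \<in> H #> ns" using subgroup.rcos_module[OF subgroup_H is_group, of ns "inv ns"] n by simp
  then show ?thesis using generator_rep[OF assms] by simp
qed

lemma nlen_eq_0_imp_H: "a \<in> N \<Longrightarrow> nlen a = 0 \<Longrightarrow> a \<in> H"
  using Weyl.len_eq_0_iff[of "H #> a"] rcos_in_Weyl rcos_eq_H_iff by auto

lemma exists_left_descent:
  assumes a: "a \<in> N" and "nlen a \<noteq> 0"
  obtains s ns where "s \<in> S" "ns \<in> s" "nlen (ns \<otimes> a) < nlen a"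
proof -
  obtain ws where ws: "Weyl.reduced ws" "Weyl.wprod ws = H #> a"
    using Weyl.obtain_reduced rcos_in_Weyl[OF a] by blast
  with assms(2) obtain x xs where xw: "ws = x # xs" by (cases ws) (auto simp: Weyl.reduced_def)
  have x: "x \<in> S" "set xs \<subseteq> S" using ws xw by (auto simp: Weyl.reduced_def)
  obtain nx where nx: "nx \<in> x" using generator_obtain_rep x by blast
  have "H #> (nx \<otimes> a) = x \<otimes>\<^bsub>Weyl\<^esub> (x \<otimes>\<^bsub>Weyl\<^esub> Weyl.wprod xs)"
    using rcos_generator_mult[OF x(1) nx a] by (simp only: ws(2)[symmetric] xw Weyl.wprod_Cons)
  also have "\<dots> = Weyl.wprod xs" using x by (intro Weyl.generator_cancel) auto
  finally have "H #> (nx \<otimes> a) = Weyl.wprod xs" .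
  then have "nlen (nx \<otimes> a) < nlen a"
    using Weyl.len_wprod_le[OF x(2)] ws xw by (simp add: Weyl.reduced_def)
  then show thesis using that x nx by blast
qed

lemma exists_right_descent:
  assumes a: "a \<in> N" and "nlen a \<noteq> 0"
  obtains s ns where "s \<in> S" "ns \<in> s" "nlen (a \<otimes> ns) < nlen a"
proof -
  obtain ws where ws: "Weyl.reduced ws" "Weyl.wprod ws = H #> a"
    using Weyl.obtain_reduced rcos_in_Weyl[OF a] by blast
  with assms(2) obtain y xs where xw: "ws = xs @ [y]" by (cases ws rule: rev_cases) (auto simp: Weyl.reduced_def)
  have y: "y \<in> S" "set xs \<subseteq> S" using ws xw by (auto simp: Weyl.reduced_def)
  obtain ny where ny: "ny \<in> y" using generator_obtain_rep y by blast
  have "H #> (a \<otimes> ny) = Weyl.wprod xs \<otimes>\<^bsub>Weyl\<^esub> y \<otimes>\<^bsub>Weyl\<^esub> y"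
    using rcos_mult_generator[OF y(1) ny a] by (simp only: ws(2)[symmetric] xw Weyl.wprod_snoc[OF y(2) y(1)])
  also have "\<dots> = Weyl.wprod xs" using y by (intro Weyl.generator_cancel_right) auto
  finally have "H #> (a \<otimes> ny) = Weyl.wprod xs" .
  then have "nlen (a \<otimes> ny) < nlen a"
    using Weyl.len_wprod_le[OF y(2)] ws xw by (simp add: Weyl.reduced_def)
  then show thesis using that y ny by blast
qed

lemma nlen_mult_generator_le:
  assumes "s \<in> S" "ns \<in> s" "a \<in> N"
  shows "nlen (a \<otimes> ns) \<le> Suc (nlen a)"
  using Weyl.len_mult_le[OF rcos_in_Weyl[OF assms(3)] Weyl.generator_carrier[OF assms(1)]]
    rcos_mult_generator[OF assms] assms by simp

definition double_coset :: "'a \<Rightarrow> 'a set" where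
  "double_coset n = {g. \<exists>b1\<in>B. \<exists>b2\<in>B. g = b1 \<otimes> n \<otimes> b2}"

lemma in_double_coset_iff: "g \<in> double_coset n \<longleftrightarrow> (\<exists>b1\<in>B. \<exists>b2\<in>B. g = b1 \<otimes> n \<otimes> b2)"
  by (simp add: double_coset_def)

lemma double_coset_mult_left:
  "g \<in> double_coset n \<Longrightarrow> b \<in> B \<Longrightarrow> n \<in> carrier G \<Longrightarrow> b \<otimes> g \<in> double_coset n"
  unfolding in_double_coset_iff by (metis B.mem_carrier B.m_closed m_assoc m_closed)

lemma double_coset_mult_right:
  "g \<in> double_coset n \<Longrightarrow> b \<in> B \<Longrightarrow> n \<in> carrier G \<Longrightarrow> g \<otimes> b \<in> double_coset n"
  unfolding in_double_coset_iff by (metis B.mem_carrier B.m_closed m_assoc m_closed)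

lemma double_coset_sym:
  assumes "g \<in> double_coset n" "n \<in> carrier G"
  shows "n \<in> double_coset g"
proof -
  obtain b1 b2 where b: "b1 \<in> B" "b2 \<in> B" "g = b1 \<otimes> n \<otimes> b2"
    using assms(1) unfolding in_double_coset_iff by blast
  then have "n = inv b1 \<otimes> g \<otimes> inv b2" using assms(2) by (simp add: m_assoc)
  then show ?thesis unfolding in_double_coset_iff using b by blast
qed

lemma double_coset_trans:
  assumes "g \<in> double_coset n" "g \<in> double_coset n'" "n \<in> carrier G" "n' \<in> carrier G"
  shows "n' \<in> double_coset n"
proof -
  obtain b1 b2 where b: "b1 \<in> B" "b2 \<in> B" "g = b1 \<otimes> n \<otimes> b2"
    using assms(1) unfolding in_double_coset_iff by blast
  obtain c1 c2 where c: "c1 \<in> B" "c2 \<in> B" "g = c1 \<otimes> n' \<otimes> c2"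
    using assms(2) unfolding in_double_coset_iff by blast
  have "n' = inv c1 \<otimes> g \<otimes> inv c2" using c assms(4) by (simp add: m_assoc)
  also have "\<dots> = (inv c1 \<otimes> b1) \<otimes> n \<otimes> (b2 \<otimes> inv c2)" using b c assms(3) by (simp add: m_assoc)
  finally show ?thesis unfolding in_double_coset_iff using b c by blast
qed

lemma inv_in_double_coset:
  assumes "g \<in> double_coset n" "n \<in> carrier G"
  shows "inv g \<in> double_coset (inv n)"
proof -
  obtain b1 b2 where b: "b1 \<in> B" "b2 \<in> B" "g = b1 \<otimes> n \<otimes> b2"
    using assms(1) unfolding in_double_coset_iff by blast
  then have "inv g = inv b2 \<otimes> inv n \<otimes> inv b1" using assms(2) by (simp add: inv_mult_group m_assoc)
  then show ?thesis unfolding in_double_coset_iff using b B.m_inv_closed by blast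
qed

lemma double_coset_B:
  assumes "a \<in> B"
  shows "double_coset a = B"
proof
  show "double_coset a \<subseteq> B" using assms by (auto simp: double_coset_def)
  show "B \<subseteq> double_coset a"
  proof
    fix b assume b: "b \<in> B"
    have "b = (b \<otimes> inv a) \<otimes> a \<otimes> \<one>" using assms b by (simp add: m_assoc)
    then show "b \<in> double_coset a"
      using assms b B.m_closed B.m_inv_closed B.one_closed unfolding in_double_coset_iff by blast
  qed
qed

lemma generator_double_coset_cases:
  assumes "s \<in> S" "ns \<in> s" "n \<in> N" "b \<in> B"
  shows "ns \<otimes> b \<otimes> n \<in> double_coset n \<or> ns \<otimes> b \<otimes> n \<in> double_coset (ns \<otimes> n)"
proof -
  have "ns \<otimes> b \<otimes> n \<in> (ns <# B) #> n" using assms(4) by (auto simp: l_coset_def r_coset_def)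
  then have "ns \<otimes> b \<otimes> n \<in> ((B #> n) <#> B) \<union> ((B #> (ns \<otimes> n)) <#> B)"
    using generator_double_coset[OF assms(1-3)] by blast
  then show ?thesis unfolding in_double_coset_iff set_mult_def r_coset_def by blast
qed

lemma generator_double_coset_cases_right:
  assumes m: "m \<in> N" and s: "s \<in> S" "ns \<in> s" and b: "b \<in> B"
  shows "m \<otimes> b \<otimes> ns \<in> double_coset m \<or> m \<otimes> b \<otimes> ns \<in> double_coset (m \<otimes> ns)"
proof -
  have c: "ns \<in> carrier G" "m \<in> carrier G" "b \<in> carrier G" using generator_rep s m b by auto
  have "inv ns \<otimes> inv b \<otimes> inv m \<in> double_coset (inv m) \<or>
        inv ns \<otimes> inv b \<otimes> inv m \<in> double_coset (inv ns \<otimes> inv m)"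
    using generator_double_coset_cases[OF s(1) inv_generator_rep[OF s] N.m_inv_closed[OF m] B.m_inv_closed[OF b]] .
  moreover have "inv ns \<otimes> inv b \<otimes> inv m = inv (m \<otimes> b \<otimes> ns)" "inv ns \<otimes> inv m = inv (m \<otimes> ns)"
    using c by (simp_all add: inv_mult_group m_assoc)
  ultimately have "inv (m \<otimes> b \<otimes> ns) \<in> double_coset (inv m) \<or>
      inv (m \<otimes> b \<otimes> ns) \<in> double_coset (inv (m \<otimes> ns))" by simp
  then show ?thesis
  proof
    assume "inv (m \<otimes> b \<otimes> ns) \<in> double_coset (inv m)"
    then show ?thesis using inv_in_double_coset[of _ "inv m"] c by fastforce
  next
    assume "inv (m \<otimes> b \<otimes> ns) \<in> double_coset (inv (m \<otimes> ns))"
    then show ?thesis using inv_in_double_coset[of _ "inv (m \<otimes> ns)"] c by fastforce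
  qed
qed

lemma double_coset_imp_rcos_eq:
  "a \<in> N \<Longrightarrow> b \<in> N \<Longrightarrow> a \<in> double_coset b \<Longrightarrow> H #> a = H #> b"
proof (induction "nlen a" arbitrary: a b rule: less_induct)
  case less
  have c: "a \<in> carrier G" "b \<in> carrier G" using less.prems by auto
  from less.prems(3) obtain b1 b2 where bb: "b1 \<in> B" "b2 \<in> B" "a = b1 \<otimes> b \<otimes> b2"
    by (auto simp: in_double_coset_iff)
  show ?case
  proof (cases "nlen a = 0")
    case True
    then have aH: "a \<in> H" using nlen_eq_0_imp_H less.prems by blast
    have "b \<in> double_coset a" using double_coset_sym less.prems(3) c by blast
    also have "double_coset a = B" using aH H_subset_B double_coset_B by blast
    finally have "b \<in> H" using less.prems(2) H_eq by simp
    then show ?thesis using aH rcos_eq_H_iff c by metis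
  next
    case False
    then obtain x m where xm: "x \<in> S" "m \<in> x" "nlen (m \<otimes> a) < nlen a"
      using exists_left_descent[OF less.prems(1)] by blast
    have mN: "m \<in> N" using generator_rep_in_N xm by blast
    have ma: "m \<otimes> a \<in> N" and mb: "m \<otimes> b \<in> N" using mN less.prems by auto
    have "m \<otimes> a = (m \<otimes> b1 \<otimes> b) \<otimes> b2" using bb c mN by (simp add: m_assoc)
    then have "m \<otimes> a \<in> double_coset b \<or> m \<otimes> a \<in> double_coset (m \<otimes> b)"
      using generator_double_coset_cases[OF xm(1,2) less.prems(2) bb(1)]
        double_coset_mult_right[OF _ bb(2)] c mN by auto
    then show ?thesis
    proof
      assume "m \<otimes> a \<in> double_coset b"
      then have "H #> (m \<otimes> a) = H #> b" using less.hyps[OF xm(3) ma less.prems(2)] by blast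
      then have "nlen b < nlen a" using xm by simp
      moreover have "b \<in> double_coset a" using double_coset_sym[OF less.prems(3)] c by blast
      ultimately show ?thesis using less.hyps[OF _ less.prems(2) less.prems(1)] by simp
    next
      assume "m \<otimes> a \<in> double_coset (m \<otimes> b)"
      then have "H #> (m \<otimes> a) = H #> (m \<otimes> b)" using less.hyps[OF xm(3) ma mb] by blast
      then show ?thesis using rcos_mult_cancel_left mN less.prems by blast
    qed
  qed
qed

lemma generator_B_double_coset_cases:
  assumes s: "s \<in> S" "ns \<in> s" and a: "a \<in> N" and b: "b \<in> B" and a': "a' \<in> N"
    and in_dc: "ns \<otimes> b \<otimes> a \<in> double_coset (ns \<otimes> a')"
  shows "H #> a' = H #> a \<or> H #> a' = H #> (ns \<otimes> a)"
proof -
  have nsN: "ns \<in> N" and ins: "inv ns \<in> s" using generator_rep inv_generator_rep s by auto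
  have c: "ns \<in> carrier G" "a \<in> carrier G" "a' \<in> carrier G" "b \<in> carrier G" using nsN a a' b by auto
  obtain e1 e2 where e: "e1 \<in> B" "e2 \<in> B" "ns \<otimes> b \<otimes> a = e1 \<otimes> (ns \<otimes> a') \<otimes> e2"
    using in_dc unfolding in_double_coset_iff by blast
  have a'_eq: "a' = (inv ns \<otimes> inv e1 \<otimes> ns) \<otimes> b \<otimes> a \<otimes> inv e2"
  proof -
    have "a' = inv ns \<otimes> inv e1 \<otimes> (e1 \<otimes> (ns \<otimes> a') \<otimes> e2) \<otimes> inv e2" using e c by (simp add: m_assoc)
    also have "\<dots> = (inv ns \<otimes> inv e1 \<otimes> ns) \<otimes> b \<otimes> a \<otimes> inv e2" using e(3)[symmetric] e c by (simp add: m_assoc)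
    finally show ?thesis .
  qed
  have "inv ns \<otimes> inv e1 \<otimes> ns \<in> double_coset ns \<or> inv ns \<otimes> inv e1 \<otimes> ns \<in> double_coset \<one>"
    using generator_double_coset_cases[OF s(1) ins nsN B.m_inv_closed[OF e(1)]] c by simp
  then have "a' \<in> double_coset a \<or> a' \<in> double_coset (ns \<otimes> a)"
  proof
    assume "inv ns \<otimes> inv e1 \<otimes> ns \<in> double_coset \<one>"
    then have "(inv ns \<otimes> inv e1 \<otimes> ns) \<otimes> b \<in> B" using b double_coset_B[OF B.one_closed] by auto
    then show ?thesis
      using a'_eq B.m_inv_closed[OF e(2)] unfolding in_double_coset_iff by blast
  next
    assume "inv ns \<otimes> inv e1 \<otimes> ns \<in> double_coset ns"
    then obtain d1 d2 where d: "d1 \<in> B" "d2 \<in> B" "inv ns \<otimes> inv e1 \<otimes> ns = d1 \<otimes> ns \<otimes> d2"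
      unfolding in_double_coset_iff by blast
    have "a' = d1 \<otimes> (ns \<otimes> (d2 \<otimes> b) \<otimes> a) \<otimes> inv e2"
      using a'_eq d e c by (simp add: m_assoc)
    moreover have "ns \<otimes> (d2 \<otimes> b) \<otimes> a \<in> double_coset a \<or> ns \<otimes> (d2 \<otimes> b) \<otimes> a \<in> double_coset (ns \<otimes> a)"
      using generator_double_coset_cases[OF s a B.m_closed[OF d(2) b]] .
    ultimately show ?thesis
      using double_coset_mult_left[OF _ d(1)] double_coset_mult_right[OF _ B.m_inv_closed[OF e(2)]] c
      by (metis m_closed)
  qed
  then show ?thesis
    using double_coset_imp_rcos_eq a a' N.m_closed[OF nsN a] by blast
qed

text \<open>\<open>\<ell>(sa) \<ge> \<ell>(a) \<Longrightarrow> sBa \<subseteq> BsaB\<close>, proved by peeling off a right descent of \<open>a\<close>.\<close>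

lemma generator_B_mult_ascent:
  assumes s: "s \<in> S" "ns \<in> s"
  shows "a \<in> N \<Longrightarrow> nlen a \<le> nlen (ns \<otimes> a) \<Longrightarrow> b \<in> B \<Longrightarrow> ns \<otimes> b \<otimes> a \<in> double_coset (ns \<otimes> a)"
proof (induction "nlen a" arbitrary: a b rule: less_induct)
  case less
  have nsN: "ns \<in> N" using generator_rep_in_N[OF s] .
  have c: "ns \<in> carrier G" "a \<in> carrier G" "b \<in> carrier G" using nsN less.prems by auto
  show ?case
  proof (cases "nlen a = 0")
    case True
    then have aB: "a \<in> B" using nlen_eq_0_imp_H less.prems H_subset_B by blast
    have "ns \<otimes> b \<otimes> a = \<one> \<otimes> (ns \<otimes> a) \<otimes> (inv a \<otimes> b \<otimes> a)" using c by (simp add: m_assoc)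
    moreover have "inv a \<otimes> b \<otimes> a \<in> B" using aB less.prems by blast
    ultimately show ?thesis unfolding in_double_coset_iff using B.one_closed by blast
  next
    case False
    then obtain y m where ym: "y \<in> S" "m \<in> y" "nlen (a \<otimes> m) < nlen a"
      using exists_right_descent[OF less.prems(1)] by blast
    define a' where "a' = a \<otimes> m"
    have mN: "m \<in> N" and im: "inv m \<in> y" using generator_rep inv_generator_rep ym by auto
    have a'N: "a' \<in> N" using mN less.prems by (simp add: a'_def)
    have nsa'N: "ns \<otimes> a' \<in> N" using nsN a'N by blast
    have a_eq: "a = a' \<otimes> inv m" using c mN by (simp add: a'_def m_assoc)
    have shorter: "nlen a' < nlen a" using ym by (simp add: a'_def)
    have "nlen a \<le> Suc (nlen a')" "nlen (ns \<otimes> a) \<le> Suc (nlen (ns \<otimes> a'))"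
      using nlen_mult_generator_le[OF ym(1) im a'N] nlen_mult_generator_le[OF ym(1) im nsa'N]
        a_eq c mN a'N by (simp_all add: m_assoc)
    then have "nlen a' \<le> nlen (ns \<otimes> a')" using less.prems(2) shorter by linarith
    then have "ns \<otimes> b \<otimes> a' \<in> double_coset (ns \<otimes> a')"
      using less.hyps[OF shorter a'N _ less.prems(3)] by blast
    then obtain c1 c2 where cc: "c1 \<in> B" "c2 \<in> B" "ns \<otimes> b \<otimes> a' = c1 \<otimes> (ns \<otimes> a') \<otimes> c2"
      unfolding in_double_coset_iff by blast
    have "ns \<otimes> b \<otimes> a = (ns \<otimes> b \<otimes> a') \<otimes> inv m" using a_eq c mN a'N by (simp add: m_assoc)
    also have "\<dots> = c1 \<otimes> ((ns \<otimes> a') \<otimes> c2 \<otimes> inv m)" using cc c mN a'N by (simp add: m_assoc)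
    finally have eq: "ns \<otimes> b \<otimes> a = c1 \<otimes> ((ns \<otimes> a') \<otimes> c2 \<otimes> inv m)" .
    have "ns \<otimes> a' \<otimes> c2 \<otimes> inv m \<in> double_coset (ns \<otimes> a') \<or>
          ns \<otimes> a' \<otimes> c2 \<otimes> inv m \<in> double_coset (ns \<otimes> a)"
      using generator_double_coset_cases_right[OF nsa'N ym(1) im cc(2)] a_eq c mN a'N
      by (simp add: m_assoc)
    moreover have "ns \<otimes> a' \<in> carrier G" "ns \<otimes> a \<in> carrier G" using c a'N by auto
    ultimately have "ns \<otimes> b \<otimes> a \<in> double_coset (ns \<otimes> a') \<or> ns \<otimes> b \<otimes> a \<in> double_coset (ns \<otimes> a)"
      unfolding eq by (metis double_coset_mult_left cc(1))
    moreover have "ns \<otimes> b \<otimes> a \<notin> double_coset (ns \<otimes> a')"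
    proof
      assume "ns \<otimes> b \<otimes> a \<in> double_coset (ns \<otimes> a')"
      then have "nlen a' = nlen a \<or> nlen a' = nlen (ns \<otimes> a)"
        using generator_B_double_coset_cases[OF s less.prems(1) less.prems(3) a'N] by auto
      then show False using shorter less.prems(2) by linarith
    qed
    ultimately show ?thesis by blast
  qed
qed

lemma exists_generator_conj_notin_B:
  assumes s: "s \<in> S" "ns \<in> s"
  shows "\<exists>b\<in>B. ns \<otimes> b \<otimes> inv ns \<notin> B"
proof (rule ccontr)
  assume "\<not> ?thesis"
  then have conj: "\<And>b. b \<in> B \<Longrightarrow> ns \<otimes> b \<otimes> inv ns \<in> B" by blast
  have ns: "ns \<in> carrier G" using generator_rep s by auto
  define h where "h = ns \<otimes> ns"
  have "h \<in> B" using generator_rep_square_in_H[OF s] H_subset_B by (auto simp: h_def)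
  then have h: "h \<in> B" "inv h \<in> B" by auto
  have "(ns <# B) #> ns = B"
  proof
    show "(ns <# B) #> ns \<subseteq> B"
    proof
      fix x assume "x \<in> (ns <# B) #> ns"
      then obtain b where b: "b \<in> B" "x = ns \<otimes> b \<otimes> ns" by (auto simp: l_coset_def r_coset_def)
      then have "x = (ns \<otimes> b \<otimes> inv ns) \<otimes> h" using ns by (simp add: h_def m_assoc)
      then show "x \<in> B" using B.m_closed[OF conj[OF b(1)] h(1)] by simp
    qed
    show "B \<subseteq> (ns <# B) #> ns"
    proof
      fix x assume x: "x \<in> B"
      have "inv ns \<otimes> x \<otimes> inv ns = inv h \<otimes> (ns \<otimes> (x \<otimes> inv h) \<otimes> inv ns) \<otimes> h"
        using ns x by (simp add: h_def m_assoc inv_mult_group)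
      moreover have "ns \<otimes> (x \<otimes> inv h) \<otimes> inv ns \<in> B" using conj B.m_closed[OF x h(2)] .
      ultimately have "inv ns \<otimes> x \<otimes> inv ns \<in> B" using h B.m_closed by presburger
      moreover have "x = ns \<otimes> (inv ns \<otimes> x \<otimes> inv ns) \<otimes> ns" using ns x by (simp add: m_assoc)
      ultimately show "x \<in> (ns <# B) #> ns" unfolding l_coset_def r_coset_def by blast
    qed
  qed
  then show False using generator_conj_B_neq[OF s] by blast
qed

lemma generator_conj_double_coset:
  assumes s: "s \<in> S" "ns \<in> s" and b: "b \<in> B" and notin: "ns \<otimes> b \<otimes> inv ns \<notin> B"
  shows "ns \<otimes> b \<otimes> inv ns \<in> double_coset (inv ns)"
proof -
  have ns: "ns \<in> N" using generator_rep_in_N[OF s] .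
  have "ns \<otimes> b \<otimes> inv ns \<in> double_coset (inv ns) \<or> ns \<otimes> b \<otimes> inv ns \<in> double_coset (ns \<otimes> inv ns)"
    using generator_double_coset_cases[OF s N.m_inv_closed[OF ns] b] .
  then show ?thesis using double_coset_B[OF B.one_closed] notin ns by auto
qed

lemma double_coset_mult_ascent:
  assumes s: "s \<in> S" "ns \<in> s" and a: "a \<in> N" and asc: "nlen a \<le> nlen (ns \<otimes> a)"
    and y: "y \<in> double_coset ns"
  shows "y \<otimes> a \<in> double_coset (ns \<otimes> a)"
proof -
  obtain d1 d2 where d: "d1 \<in> B" "d2 \<in> B" "y = d1 \<otimes> ns \<otimes> d2"
    using y unfolding in_double_coset_iff by blast
  have c: "ns \<in> carrier G" "a \<in> carrier G" using generator_rep s a by auto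
  have "y \<otimes> a = d1 \<otimes> (ns \<otimes> d2 \<otimes> a)" using d c by (simp add: m_assoc)
  then show ?thesis
    using double_coset_mult_left[OF generator_B_mult_ascent[OF s a asc d(2)] d(1)] c by simp
qed

lemma nlen_generator_mult_neq:
  assumes s: "s \<in> S" "ns \<in> s" and a: "a \<in> N"
  shows "nlen (ns \<otimes> a) \<noteq> nlen a"
proof
  assume eq: "nlen (ns \<otimes> a) = nlen a"
  have ns: "ns \<in> N" "inv ns \<in> s" using generator_rep inv_generator_rep s by auto
  have c: "ns \<in> carrier G" "a \<in> carrier G" using ns a by auto
  obtain b where b: "b \<in> B" "ns \<otimes> b \<otimes> inv ns \<notin> B" using exists_generator_conj_notin_B[OF s] by blast
  have asc: "nlen (ns \<otimes> a) \<le> nlen (inv ns \<otimes> (ns \<otimes> a))" using eq c by simp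
  have "(ns \<otimes> b \<otimes> inv ns) \<otimes> (ns \<otimes> a) \<in> double_coset a"
    using double_coset_mult_ascent[OF s(1) ns(2) _ asc generator_conj_double_coset[OF s b]] ns a c
    by simp
  moreover have "(ns \<otimes> b \<otimes> inv ns) \<otimes> (ns \<otimes> a) = ns \<otimes> b \<otimes> a" using b c by (simp add: m_assoc)
  ultimately have "ns \<otimes> b \<otimes> a \<in> double_coset a" by simp
  moreover have "ns \<otimes> b \<otimes> a \<in> double_coset (ns \<otimes> a)"
    using generator_B_mult_ascent[OF s a _ b(1)] eq by simp
  ultimately have "ns \<otimes> a \<in> double_coset a" using double_coset_trans c by blast
  then show False
    using double_coset_imp_rcos_eq ns a rcos_generator_mult_neq[OF s a] by blast
qed

lemma conj_B_descent:
  assumes x: "x \<in> B" and a: "a \<in> N" and conj: "a \<otimes> x \<otimes> inv a \<in> B"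
    and s: "s \<in> S" "ns \<in> s" and desc: "nlen (ns \<otimes> a) < nlen a"
  shows "(ns \<otimes> a) \<otimes> x \<otimes> inv (ns \<otimes> a) \<in> B"
proof (rule ccontr)
  assume notin: "(ns \<otimes> a) \<otimes> x \<otimes> inv (ns \<otimes> a) \<notin> B"
  have ns: "ns \<in> N" "inv ns \<in> s" using generator_rep inv_generator_rep s by auto
  have c: "ns \<in> carrier G" "a \<in> carrier G" "x \<in> carrier G" using ns a x by auto
  have eq: "(ns \<otimes> a) \<otimes> x \<otimes> inv (ns \<otimes> a) = ns \<otimes> (a \<otimes> x \<otimes> inv a) \<otimes> inv ns"
    using c by (simp add: m_assoc inv_mult_group)
  have asc: "nlen (ns \<otimes> a) \<le> nlen (inv ns \<otimes> (ns \<otimes> a))" using desc c by simp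
  have "(ns \<otimes> (a \<otimes> x \<otimes> inv a) \<otimes> inv ns) \<otimes> (ns \<otimes> a) \<in> double_coset a"
    using double_coset_mult_ascent[OF s(1) ns(2) _ asc generator_conj_double_coset[OF s conj]]
      notin eq ns a c by simp
  moreover have "(ns \<otimes> (a \<otimes> x \<otimes> inv a) \<otimes> inv ns) \<otimes> (ns \<otimes> a) = (ns \<otimes> a) \<otimes> x"
    using c by (simp add: m_assoc)
  ultimately have "(ns \<otimes> a) \<otimes> x \<otimes> inv x \<in> double_coset a"
    using double_coset_mult_right[OF _ B.m_inv_closed[OF x]] c by simp
  then have "H #> (ns \<otimes> a) = H #> a"
    using double_coset_imp_rcos_eq ns a c by (simp add: m_assoc)
  then show False using rcos_generator_mult_neq[OF s a] by blast
qed

lemma descent_double_coset: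
  assumes s: "s \<in> S" "ns \<in> s" and q: "q \<in> N" and desc: "nlen (ns \<otimes> q) < nlen q"
  shows "\<exists>b\<in>B. ns \<otimes> b \<otimes> q \<in> double_coset q"
proof (rule ccontr)
  assume "\<not> ?thesis"
  then have up: "ns \<otimes> b \<otimes> q \<in> double_coset (ns \<otimes> q)" if "b \<in> B" for b
    using generator_double_coset_cases[OF s q that] that by blast
  have ns: "ns \<in> N" "inv ns \<in> s" using generator_rep inv_generator_rep s by auto
  have c: "ns \<in> carrier G" "q \<in> carrier G" using ns q by auto
  obtain b where b: "b \<in> B" "inv ns \<otimes> b \<otimes> ns \<notin> B"
    using exists_generator_conj_notin_B[OF s(1) ns(2)] c by auto
  obtain d1 d2 where d: "d1 \<in> B" "d2 \<in> B" "inv ns \<otimes> b \<otimes> ns = d1 \<otimes> ns \<otimes> d2"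
    using generator_conj_double_coset[OF s(1) ns(2) b(1)] b(2) c unfolding in_double_coset_iff by auto
  have "inv ns \<otimes> b \<otimes> ns \<otimes> q = d1 \<otimes> (ns \<otimes> d2 \<otimes> q)" using d c by (simp add: m_assoc)
  then have g_up: "inv ns \<otimes> b \<otimes> ns \<otimes> q \<in> double_coset (ns \<otimes> q)"
    using double_coset_mult_left[OF up[OF d(2)] d(1)] c by simp
  have "nlen (ns \<otimes> q) \<le> nlen (inv ns \<otimes> (ns \<otimes> q))" using desc c by simp
  then have "inv ns \<otimes> b \<otimes> (ns \<otimes> q) \<in> double_coset (inv ns \<otimes> (ns \<otimes> q))"
    using generator_B_mult_ascent[OF s(1) ns(2) N.m_closed[OF ns(1) q] _ b(1)] by simp
  moreover have "inv ns \<otimes> b \<otimes> (ns \<otimes> q) = inv ns \<otimes> b \<otimes> ns \<otimes> q" "inv ns \<otimes> (ns \<otimes> q) = q"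
    using b c by (simp_all add: m_assoc)
  ultimately have "inv ns \<otimes> b \<otimes> ns \<otimes> q \<in> double_coset q" by simp
  then have "ns \<otimes> q \<in> double_coset q" using double_coset_trans[OF _ g_up] c by blast
  then show False
    using double_coset_imp_rcos_eq ns q rcos_generator_mult_neq[OF s q] by blast
qed

lemma rcos_generator_mult_eq_of_switch:
  assumes s: "s \<in> S" "ns \<in> s" and y: "y \<in> S" "ny \<in> y" and p: "p \<in> N"
    and asc: "nlen p \<le> nlen (ns \<otimes> p)" and desc: "nlen (ns \<otimes> (p \<otimes> ny)) < nlen (p \<otimes> ny)"
  shows "H #> (ns \<otimes> p) = H #> (p \<otimes> ny)"
proof -
  define q where "q = p \<otimes> ny"
  have N: "ns \<in> N" "ny \<in> N" "q \<in> N" "ns \<otimes> p \<in> N" "ns \<otimes> q \<in> N"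
    using generator_rep s y p by (auto simp: q_def)
  have c: "ns \<in> carrier G" "p \<in> carrier G" "ny \<in> carrier G" using N p by auto
  obtain b where b: "b \<in> B" "ns \<otimes> b \<otimes> q \<in> double_coset q"
    using descent_double_coset[OF s N(3)] desc by (auto simp: q_def)
  obtain c1 c2 where cc: "c1 \<in> B" "c2 \<in> B" "ns \<otimes> b \<otimes> p = c1 \<otimes> (ns \<otimes> p) \<otimes> c2"
    using generator_B_mult_ascent[OF s p asc b(1)] unfolding in_double_coset_iff by blast
  have "ns \<otimes> b \<otimes> q = (ns \<otimes> b \<otimes> p) \<otimes> ny" using c b by (simp add: q_def m_assoc)
  also have "\<dots> = c1 \<otimes> ((ns \<otimes> p) \<otimes> c2 \<otimes> ny)" using cc c by (simp add: m_assoc)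
  finally have eq: "ns \<otimes> b \<otimes> q = c1 \<otimes> ((ns \<otimes> p) \<otimes> c2 \<otimes> ny)" .
  have "ns \<otimes> p \<otimes> c2 \<otimes> ny \<in> double_coset (ns \<otimes> p) \<or> ns \<otimes> p \<otimes> c2 \<otimes> ny \<in> double_coset (ns \<otimes> q)"
    using generator_double_coset_cases_right[OF N(4) y cc(2)] c by (simp add: q_def m_assoc)
  moreover have "ns \<otimes> p \<in> carrier G" "ns \<otimes> q \<in> carrier G" "q \<in> carrier G" using N by auto
  ultimately have "ns \<otimes> b \<otimes> q \<in> double_coset (ns \<otimes> p) \<or> ns \<otimes> b \<otimes> q \<in> double_coset (ns \<otimes> q)"
    unfolding eq using double_coset_mult_left[OF _ cc(1)] by blast
  then have "ns \<otimes> p \<in> double_coset q \<or> ns \<otimes> q \<in> double_coset q"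
    using double_coset_trans[OF b(2)] \<open>ns \<otimes> p \<in> carrier G\<close> \<open>ns \<otimes> q \<in> carrier G\<close> \<open>q \<in> carrier G\<close>
    by blast
  moreover have "H #> (ns \<otimes> q) \<noteq> H #> q" using rcos_generator_mult_neq[OF s N(3)] .
  ultimately have "H #> (ns \<otimes> p) = H #> q"
    using double_coset_imp_rcos_eq[OF N(4) N(3)] double_coset_imp_rcos_eq[OF N(5) N(3)] by blast
  then show ?thesis by (simp add: q_def)
qed

lemma Weyl_switch:
  assumes "w \<in> carrier Weyl" "s \<in> S" "t \<in> S" "Weyl.len w \<le> Weyl.len (s \<otimes>\<^bsub>Weyl\<^esub> w)"
    "Weyl.len (s \<otimes>\<^bsub>Weyl\<^esub> (w \<otimes>\<^bsub>Weyl\<^esub> t)) < Weyl.len (w \<otimes>\<^bsub>Weyl\<^esub> t)"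
  shows "s \<otimes>\<^bsub>Weyl\<^esub> w = w \<otimes>\<^bsub>Weyl\<^esub> t"
proof -
  obtain p where p: "p \<in> N" "w = H #> p" using Weyl_obtain_rcos assms(1) by blast
  obtain ns where ns: "ns \<in> s" using generator_obtain_rep assms(2) by blast
  obtain nt where nt: "nt \<in> t" using generator_obtain_rep assms(3) by blast
  have pt: "p \<otimes> nt \<in> N" using p generator_rep[OF assms(3) nt] by auto
  have "s \<otimes>\<^bsub>Weyl\<^esub> w = H #> (ns \<otimes> p)" "w \<otimes>\<^bsub>Weyl\<^esub> t = H #> (p \<otimes> nt)"
    "s \<otimes>\<^bsub>Weyl\<^esub> (w \<otimes>\<^bsub>Weyl\<^esub> t) = H #> (ns \<otimes> (p \<otimes> nt))"
    using rcos_generator_mult[OF assms(2) ns p(1)] rcos_mult_generator[OF assms(3) nt p(1)]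
      rcos_generator_mult[OF assms(2) ns pt] p(2) by simp_all
  then show ?thesis
    using rcos_generator_mult_eq_of_switch[OF assms(2) ns assms(3) nt p(1)] assms(4,5) p(2) by simp
qed

sublocale Weyl: exchange_condition Weyl S
proof (intro exchange_condition.intro exchange_condition_axioms.intro)
  show "involution_generated Weyl S" by (rule Weyl.involution_generated_axioms)
next
  fix s w assume s: "s \<in> S" and w: "w \<in> carrier Weyl"
  obtain a where a: "a \<in> N" "w = H #> a" using Weyl_obtain_rcos w by blast
  obtain ns where ns: "ns \<in> s" using generator_obtain_rep s by blast
  show "Weyl.len (s \<otimes>\<^bsub>Weyl\<^esub> w) \<noteq> Weyl.len w"
    using nlen_generator_mult_neq[OF s ns a(1)] rcos_generator_mult[OF s ns a(1)] a(2) by simp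
next
  fix ws s assume "Weyl.reduced ws" "s \<in> S"
    "Weyl.len (s \<otimes>\<^bsub>Weyl\<^esub> Weyl.wprod ws) < Weyl.len (Weyl.wprod ws)"
  then show "\<exists>i<length ws. s \<otimes>\<^bsub>Weyl\<^esub> Weyl.wprod ws = Weyl.wprod (take i ws @ drop (Suc i) ws)"
    using Weyl.exchange_of_switch[OF Weyl_switch] unfolding Weyl.reduced_def by blast
qed

lemma rcos_inv_eq_inv_Weyl:
  assumes "a \<in> N"
  shows "H #> inv a = inv\<^bsub>Weyl\<^esub> (H #> a)"
proof -
  have "(H #> inv a) \<otimes>\<^bsub>Weyl\<^esub> (H #> a) = \<one>\<^bsub>Weyl\<^esub>"
    using rcos_mult_rcos[of "inv a" a] assms rcos_eq_H_iff by (simp add: mult_Weyl)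
  then show ?thesis using Weyl.inv_equality rcos_in_Weyl assms by (metis N.m_inv_closed)
qed

lemma nlen_inv: "a \<in> N \<Longrightarrow> nlen (inv a) = nlen a"
  using rcos_inv_eq_inv_Weyl Weyl.len_inv rcos_in_Weyl by simp

lemma rcos_eq_imp_conj_B:
  assumes a: "a \<in> N" "a' \<in> N" "H #> a = H #> a'" and x: "x \<in> carrier G"
    and conj: "a \<otimes> x \<otimes> inv a \<in> B"
  shows "a' \<otimes> x \<otimes> inv a' \<in> B"
proof -
  define h where "h = a' \<otimes> inv a"
  have h: "h \<in> H" using a rcos_eq_iff[of a' a] by (simp add: h_def)
  have "a' \<otimes> x \<otimes> inv a' = h \<otimes> (a \<otimes> x \<otimes> inv a) \<otimes> inv h"
    using a x by (simp add: h_def m_assoc inv_mult_group)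
  then show ?thesis using h H_subset_B conj by auto
qed

text \<open>Conjugating a fixed \<open>x \<in> B\<close> into \<open>B\<close> is preserved when walking down the weak order from the
  longest element, so \<open>B \<inter> B\<^sup>n\<^sup>0 \<subseteq> B\<^sup>n\<close> for every \<open>n \<in> N\<close>.\<close>

lemma conj_B_longest_imp_conj_B:
  assumes n0: "n0 \<in> N" and longest: "\<And>a. a \<in> N \<Longrightarrow> nlen a \<le> nlen n0"
    and x: "x \<in> B" and conj_n0: "inv n0 \<otimes> x \<otimes> n0 \<in> B" and n: "n \<in> N"
  shows "inv n \<otimes> x \<otimes> n \<in> B"
proof -
  define good where "good w \<longleftrightarrow> (\<exists>a\<in>N. w = H #> a \<and> a \<otimes> x \<otimes> inv a \<in> B)" for w
  define v0 where "v0 = H #> inv n0"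
  have v0: "v0 \<in> carrier Weyl" using n0 rcos_in_Weyl by (simp add: v0_def)
  have v0_longest: "Weyl.len w \<le> Weyl.len v0" if "w \<in> carrier Weyl" for w
    using that longest nlen_inv[OF n0] Weyl_obtain_rcos by (metis v0_def)
  have "good v0" using n0 conj_n0 by (auto simp: good_def v0_def)
  moreover have "good (s \<otimes>\<^bsub>Weyl\<^esub> w)"
    if s: "s \<in> S" and "good w" and desc: "Weyl.len (s \<otimes>\<^bsub>Weyl\<^esub> w) < Weyl.len w" for w s
  proof -
    obtain a where a: "a \<in> N" "w = H #> a" "a \<otimes> x \<otimes> inv a \<in> B"
      using \<open>good w\<close> by (auto simp: good_def)
    obtain ns where ns: "ns \<in> s" using generator_obtain_rep s by blast
    have e: "H #> (ns \<otimes> a) = s \<otimes>\<^bsub>Weyl\<^esub> w" using rcos_generator_mult[OF s ns a(1)] a(2) by simp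
    then have "(ns \<otimes> a) \<otimes> x \<otimes> inv (ns \<otimes> a) \<in> B"
      using conj_B_descent[OF x a(1) a(3) s ns] desc a(2) by simp
    then show ?thesis unfolding good_def e[symmetric] using generator_rep[OF s ns] a(1) by blast
  qed
  moreover have "Weyl.weak_le (H #> inv n) v0"
    using Weyl.weak_le_longest[OF v0 v0_longest] rcos_in_Weyl n by blast
  ultimately have "good (H #> inv n)"
    using Weyl.weak_le_descent_induct[of "H #> inv n" v0 good] rcos_in_Weyl n v0 by blast
  then obtain a where "a \<in> N" "H #> a = H #> inv n" "a \<otimes> x \<otimes> inv a \<in> B" by (auto simp: good_def)
  then show ?thesis using rcos_eq_imp_conj_B[of a "inv n" x] n x by simp
qed

lemma H_inter_U_opposite_U_U:
  assumes U: "subgroup U G" "U \<subseteq> B" "U \<inter> H = {\<one>}"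
    and conj_B: "(\<Inter>n\<in>N. (n <# B) #> inv n) = H"
    and n0: "n0 \<in> N" and longest: "\<And>a. a \<in> N \<Longrightarrow> nlen a \<le> nlen n0"
  shows "H \<inter> ((U <#> ((inv n0 <# U) #> n0)) <#> U) = {\<one>}"
proof
  interpret U: subgroup U G by (rule U(1))
  show "H \<inter> ((U <#> ((inv n0 <# U) #> n0)) <#> U) \<subseteq> {\<one>}"
  proof
    fix g assume g: "g \<in> H \<inter> ((U <#> ((inv n0 <# U) #> n0)) <#> U)"
    then obtain u1 u u2 where u: "u1 \<in> U" "u \<in> U" "u2 \<in> U"
      and g_eq: "g = u1 \<otimes> ((inv n0 \<otimes> u) \<otimes> n0) \<otimes> u2"
      by (auto simp: set_mult_def l_coset_def r_coset_def)
    have gH: "g \<in> H" using g by blast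
    have "inv n0 \<otimes> u \<otimes> n0 = inv u1 \<otimes> g \<otimes> inv u2" using u g_eq n0 by (simp add: m_assoc)
    then have "inv n0 \<otimes> u \<otimes> n0 \<in> B" using u U(2) gH H_subset_B by (auto intro!: B.m_closed)
    then have "inv n \<otimes> u \<otimes> n \<in> B" if "n \<in> N" for n
      using conj_B_longest_imp_conj_B[OF n0 longest] u U(2) that by blast
    then have "u \<in> (n <# B) #> inv n" if "n \<in> N" for n
      using that u by (force simp: l_coset_def r_coset_def m_assoc)
    then have "u \<in> H" using conj_B by blast
    then have "u = \<one>" using U(3) u by blast
    then have "g \<in> U" using u g_eq n0 by (simp add: m_assoc)
    then show "g \<in> {\<one>}" using U(3) gH by blast
  qed
  have "\<one> = \<one> \<otimes> ((inv n0 \<otimes> \<one>) \<otimes> n0) \<otimes> \<one>" using n0 by simp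
  then have "\<one> \<in> (U <#> ((inv n0 <# U) #> n0)) <#> U"
    unfolding set_mult_def l_coset_def r_coset_def using U.one_closed by blast
  then show "{\<one>} \<subseteq> H \<inter> ((U <#> ((inv n0 <# U) #> n0)) <#> U)" using H.one_closed by blast
qed

lemma longest_element_rep:
  assumes w0: "w0 \<in> weyl_group G H N"
    and longest: "\<forall>w\<in>weyl_group G H N. weyl_length G H S w \<le> weyl_length G H S w0"
    and n0: "n0 \<in> w0"
  shows "n0 \<in> N" and "\<And>a. a \<in> N \<Longrightarrow> nlen a \<le> nlen n0"
proof -
  obtain a where a: "a \<in> N" "w0 = H #> a" using w0 by (auto simp: weyl_group_def)
  then obtain h where "h \<in> H" "n0 = h \<otimes> a" using n0 by (auto simp: r_coset_def)
  then show n0N: "n0 \<in> N" using a H_subset_N by blast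
  have "w0 = H #> n0" using a n0 repr_independence[OF _ _ subgroup_H] N.mem_carrier by blast
  then show "nlen b \<le> nlen n0" if "b \<in> N" for b
    using longest rcos_in_Weyl[OF that] by (simp add: carrier_Weyl word_length_Weyl)
qed

end

lemma BN_pair_imp_bn_pair: "BN_pair G B N S \<Longrightarrow> bn_pair G B N (B \<inter> N) S"
  unfolding BN_pair_def by (intro bn_pair.intro bn_pair_axioms.intro) auto

theorem lemma7:
  fixes G :: "('a, 'b) monoid_scheme"
    and H U N :: "'a set" and S :: "'a set set" and w0 :: "'a set" and n0 :: 'a
  assumes "split_BN_pair G H U N S"
    and "finite (weyl_group G H N)"
    and "w0 \<in> weyl_group G H N"
    and "\<forall>w\<in>weyl_group G H N. weyl_length G H S w \<le> weyl_length G H S w0"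
    and "n0 \<in> w0"
  shows "H \<inter> ((U <#>\<^bsub>G\<^esub> ((inv\<^bsub>G\<^esub> n0 <#\<^bsub>G\<^esub> U) #>\<^bsub>G\<^esub> n0)) <#>\<^bsub>G\<^esub> U)
         = {\<one>\<^bsub>G\<^esub>}"
proof -
  define B where "B = U <#>\<^bsub>G\<^esub> H"
  have split: "BN_pair G B N S" "H = B \<inter> N" "subgroup U G" "normal U (G\<lparr>carrier := B\<rparr>)"
    "U \<inter> H = {\<one>\<^bsub>G\<^esub>}" "(\<Inter>n\<in>N. (n <#\<^bsub>G\<^esub> B) #>\<^bsub>G\<^esub> inv\<^bsub>G\<^esub> n) = H"
    using assms(1) unfolding split_BN_pair_def Let_def B_def by auto
  interpret bn_pair G B N H S using BN_pair_imp_bn_pair[OF split(1)] split(2) by simp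
  have "U \<subseteq> B" using normal_imp_subgroup[OF split(4)] subgroup.subset by force
  with split show ?thesis
    using H_inter_U_opposite_U_U longest_element_rep[OF assms(3-5)] by blast
qed

end
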